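(* Consider a state-dependent discrete memoryless channel $W_{Y,Z|X,S}$ with finite alphabets, i.i.d. state distribution $Q_S$, innocent symbol $x_0$, and strictly causal channel state information available only at the transmitter (encoder $X_i=f_i(M,S^{i-1})$, decoder $Y^n\mapsto\hat M$). Let $\mathcal D$ be the set of joint pmfs $P_{S,X,Y,Z}=Q_SP_XW_{Y,Z|X,S}$ such that $P_Z=Q_0$ and $\mathbb I(X;Y)>\mathbb I(X;Z)$. Let $\mathcal S=\{R\ge0:\exists P\in\mathcal D\text{ with }R\le\mathbb I(X;Y)\}$. Then the covert capacity satisfies $C_{\mathrm{SC\text{-}T}}\ge\max\{x:x\in\mathcal S\}$.
   Context: Finite alphabets $\mathcal S,\mathcal X,\mathcal Y,\mathcal Z$. The channel has transition pmf $W_{Y,Z|X,S}$: input $X$, state $S$, output $Y$ at the legitimate receiver and output $Z$ at an adversary (warden). The state sequence $S^n$ is i.i.d. with pmf $Q_S$ and independent of the message; neither the legitimate receiver nor the warden knows the state. $x_0\in\mathcal X$ is a fixed innocent symbol, and $Q_0(z)=\sum_{s}Q_S(s)W_{Z|X,S}(z|x_0,s)$, assumed to have full support on $\mathcal Z$. A $(2^{nR},n)$ code consists of a message $M$ uniform on $\{1,\dots,2^{nR}\}$, an encoder and a decoder of the type specified. $P_{Z^n}$ denotes the distribution of the warden's output induced by the code. A rate $R$ is achievable if there is a sequence of $(2^{nR},n)$ codes with $\mathbb P(\hat M\ne M)\to 0$ and $\mathbb D(P_{Z^n}\|Q_0^{\otimes n})\to 0$ as $n\to\infty$; the covert capacity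 is the supremum of achievable rates. Mutual informations are computed under the indicated joint pmf. *)

theory Defs
  imports Complex_Main "HOL-Library.Extended_Real"
begin

text \<open>Finite alphabets are finite types 's, 'x, 'y, 'z.
  Channel: W x s y z = W_{Y,Z|X,S}(y,z|x,s).  Q = Q_S.
  Length-n sequences are lists of length n.\<close>

definition seqs :: "nat \<Rightarrow> 'a list set" where
  "seqs n = {xs. length xs = n}"

definition innocent_dist ::
  "('s::finite \<Rightarrow> real) \<Rightarrow> ('x \<Rightarrow> 's \<Rightarrow> 'y::finite \<Rightarrow> 'z \<Rightarrow> real) \<Rightarrow> 'x \<Rightarrow> 'z \<Rightarrow> real" where
  "innocent_dist Q W x0 z = (\<Sum>s\<in>UNIV. \<Sum>y\<in>UNIV. Q s * W x0 s y z)"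

definition num_msgs :: "real \<Rightarrow> nat \<Rightarrow> nat" where
  "num_msgs R n = nat \<lceil>2 powr (real n * R)\<rceil>"

text \<open>Joint pmf of (M, S^n, Y^n, Z^n) induced by a code with strictly causal
  state information at the transmitter: X_i = enc i m (S_0 ... S_{i-1}) (0-indexed),
  message M uniform on {0..<N}.\<close>
definition code_joint ::
  "('s \<Rightarrow> real) \<Rightarrow> ('x \<Rightarrow> 's \<Rightarrow> 'y \<Rightarrow> 'z \<Rightarrow> real) \<Rightarrow> nat \<Rightarrow> nat
   \<Rightarrow> (nat \<Rightarrow> nat \<Rightarrow> 's list \<Rightarrow> 'x) \<Rightarrow> nat \<Rightarrow> 's list \<Rightarrow> 'y list \<Rightarrow> 'z list \<Rightarrow> real" where
  "code_joint Q W N n enc m ss ys zs =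
     (1 / real N) * (\<Prod>i<n. Q (ss ! i) * W (enc i m (take i ss)) (ss ! i) (ys ! i) (zs ! i))"

definition code_error ::
  "('s::finite \<Rightarrow> real) \<Rightarrow> ('x \<Rightarrow> 's \<Rightarrow> 'y::finite \<Rightarrow> 'z::finite \<Rightarrow> real) \<Rightarrow> nat \<Rightarrow> nat
   \<Rightarrow> (nat \<Rightarrow> nat \<Rightarrow> 's list \<Rightarrow> 'x) \<Rightarrow> ('y list \<Rightarrow> nat) \<Rightarrow> real" where
  "code_error Q W N n enc dec =
     (\<Sum>m<N. \<Sum>ss\<in>seqs n. \<Sum>ys\<in>seqs n. \<Sum>zs\<in>seqs n.
        if dec ys \<noteq> m then code_joint Q W N n enc m ss ys zs else 0)"

definition code_PZ ::
  "('s::finite \<Rightarrow> real) \<Rightarrow> ('x \<Rightarrow> 's \<Rightarrow> 'y::finite \<Rightarrow> 'z \<Rightarrow> real) \<Rightarrow> nat \<Rightarrow> nat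
   \<Rightarrow> (nat \<Rightarrow> nat \<Rightarrow> 's list \<Rightarrow> 'x) \<Rightarrow> 'z list \<Rightarrow> real" where
  "code_PZ Q W N n enc zs =
     (\<Sum>m<N. \<Sum>ss\<in>seqs n. \<Sum>ys\<in>seqs n. code_joint Q W N n enc m ss ys zs)"

definition kl_div :: "'a set \<Rightarrow> ('a \<Rightarrow> real) \<Rightarrow> ('a \<Rightarrow> real) \<Rightarrow> real" where
  "kl_div A P Qd = (\<Sum>a\<in>A. if P a = 0 then 0 else P a * ln (P a / Qd a))"

definition code_covertness ::
  "('s::finite \<Rightarrow> real) \<Rightarrow> ('x \<Rightarrow> 's \<Rightarrow> 'y::finite \<Rightarrow> 'z::finite \<Rightarrow> real) \<Rightarrow> 'x \<Rightarrow> nat \<Rightarrow> nat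
   \<Rightarrow> (nat \<Rightarrow> nat \<Rightarrow> 's list \<Rightarrow> 'x) \<Rightarrow> real" where
  "code_covertness Q W x0 N n enc =
     kl_div (seqs n) (code_PZ Q W N n enc)
       (\<lambda>zs. \<Prod>i<n. innocent_dist Q W x0 (zs ! i))"

definition covert_achievable_SCT ::
  "('s::finite \<Rightarrow> real) \<Rightarrow> ('x \<Rightarrow> 's \<Rightarrow> 'y::finite \<Rightarrow> 'z::finite \<Rightarrow> real) \<Rightarrow> 'x \<Rightarrow> real \<Rightarrow> bool" where
  "covert_achievable_SCT Q W x0 R \<longleftrightarrow>
     (\<exists>(enc :: nat \<Rightarrow> nat \<Rightarrow> nat \<Rightarrow> 's list \<Rightarrow> 'x) (dec :: nat \<Rightarrow> 'y list \<Rightarrow> nat).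
        (\<lambda>n. code_error Q W (num_msgs R n) n (enc n) (dec n)) \<longlonglongrightarrow> 0 \<and>
        (\<lambda>n. code_covertness Q W x0 (num_msgs R n) n (enc n)) \<longlonglongrightarrow> 0)"

definition covert_capacity_SCT ::
  "('s::finite \<Rightarrow> real) \<Rightarrow> ('x \<Rightarrow> 's \<Rightarrow> 'y::finite \<Rightarrow> 'z::finite \<Rightarrow> real) \<Rightarrow> 'x \<Rightarrow> ereal" where
  "covert_capacity_SCT Q W x0 = Sup (ereal ` {R. covert_achievable_SCT Q W x0 R})"

definition mutual_info :: "('a::finite \<Rightarrow> 'b::finite \<Rightarrow> real) \<Rightarrow> real" where
  "mutual_info p = (\<Sum>a\<in>UNIV. \<Sum>b\<in>UNIV.
     if p a b = 0 then 0
     else p a b * log 2 (p a b / ((\<Sum>b'\<in>UNIV. p a b') * (\<Sum>a'\<in>UNIV. p a' b))))"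

definition joint_XY :: "('s::finite \<Rightarrow> real) \<Rightarrow> ('x \<Rightarrow> 's \<Rightarrow> 'y \<Rightarrow> 'z::finite \<Rightarrow> real) \<Rightarrow> ('x \<Rightarrow> real) \<Rightarrow> 'x \<Rightarrow> 'y \<Rightarrow> real" where
  "joint_XY Q W PX x y = (\<Sum>s\<in>UNIV. \<Sum>z\<in>UNIV. Q s * PX x * W x s y z)"

definition joint_XZ :: "('s::finite \<Rightarrow> real) \<Rightarrow> ('x \<Rightarrow> 's \<Rightarrow> 'y::finite \<Rightarrow> 'z \<Rightarrow> real) \<Rightarrow> ('x \<Rightarrow> real) \<Rightarrow> 'x \<Rightarrow> 'z \<Rightarrow> real" where
  "joint_XZ Q W PX x z = (\<Sum>s\<in>UNIV. \<Sum>y\<in>UNIV. Q s * PX x * W x s y z)"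

definition marg_Z :: "('s::finite \<Rightarrow> real) \<Rightarrow> ('x::finite \<Rightarrow> 's \<Rightarrow> 'y::finite \<Rightarrow> 'z \<Rightarrow> real) \<Rightarrow> ('x \<Rightarrow> real) \<Rightarrow> 'z \<Rightarrow> real" where
  "marg_Z Q W PX z = (\<Sum>x\<in>UNIV. joint_XZ Q W PX x z)"

definition is_pmf :: "('a::finite \<Rightarrow> real) \<Rightarrow> bool" where
  "is_pmf p \<longleftrightarrow> (\<forall>a. 0 \<le> p a) \<and> (\<Sum>a\<in>UNIV. p a) = 1"

text \<open>The set \<D>, represented by the input pmf P_X (the joint is Q_S P_X W).\<close>
definition set_D :: "('s::finite \<Rightarrow> real) \<Rightarrow> ('x::finite \<Rightarrow> 's \<Rightarrow> 'y::finite \<Rightarrow> 'z::finite \<Rightarrow> real) \<Rightarrow> 'x \<Rightarrow> ('x \<Rightarrow> real) set" where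
  "set_D Q W x0 = {PX. is_pmf PX \<and> marg_Z Q W PX = innocent_dist Q W x0 \<and>
      mutual_info (joint_XY Q W PX) > mutual_info (joint_XZ Q W PX)}"

definition set_S :: "('s::finite \<Rightarrow> real) \<Rightarrow> ('x::finite \<Rightarrow> 's \<Rightarrow> 'y::finite \<Rightarrow> 'z::finite \<Rightarrow> real) \<Rightarrow> 'x \<Rightarrow> real set" where
  "set_S Q W x0 = {R. 0 \<le> R \<and> (\<exists>PX\<in>set_D Q W x0. R \<le> mutual_info (joint_XY Q W PX))}"

end

theory Submission
  imports Defs "HOL-Analysis.Convex"
begin

text \<open>
  The encoder below ignores the state, so the state is averaged into two memoryless channels
  X \<rightarrow> Y and X \<rightarrow> Z. Fix P_X in D and a rate I(X;Z) < r < I(X;Y), and draw N = 2^(nr) codewords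
  i.i.d. from P_X^n. A threshold decoder on the information density fails, by the union bound
  and Chernoff's bound, with probability decaying exponentially because r < I(X;Y). Because
  P_Z = Q_0, covertness is a resolvability statement: conditioning on each codeword, Jensen's
  inequality and ln (1 + u) \<le> u^\<rho> / \<rho> bound the expected divergence D(P_Z^n || Q_0^n) by
  N^(-\<rho>) E[exp (\<rho> i(X;Z))]^n / \<rho>, which decays exponentially because r > I(X;Z). Some codebook
  does at least as well as the average of error probability plus divergence, so every r strictly
  between I(X;Z) and I(X;Y) is achievable, and the capacity is at least I(X;Y).
\<close>

definition tuples :: "'a set \<Rightarrow> nat \<Rightarrow> 'a list set" where
  "tuples A n = {xs. set xs \<subseteq> A \<and> length xs = n}"

definition iid_pmf :: "('a \<Rightarrow> real) \<Rightarrow> nat \<Rightarrow> 'a list \<Rightarrow> real" where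
  "iid_pmf P n xs = (\<Prod>i<n. P (xs ! i))"

lemma finite_tuples: "finite A \<Longrightarrow> finite (tuples A n)"
  by (simp add: tuples_def finite_lists_length_eq)

lemma tuples_Suc: "tuples A (Suc n) = (\<lambda>(a, xs). a # xs) ` (A \<times> tuples A n)"
  by (auto simp: tuples_def length_Suc_conv image_iff)

lemma seqs_eq_tuples: "seqs n = tuples UNIV n"
  by (simp add: seqs_def tuples_def)

lemma finite_seqs [simp]: "finite (seqs n :: 'a::finite list set)"
  by (simp add: seqs_eq_tuples finite_tuples)

lemma nth_in_tuples: "xs \<in> tuples A n \<Longrightarrow> i < n \<Longrightarrow> xs ! i \<in> A"
  by (auto simp: tuples_def)

lemma sum_tuples_prod_nth:
  fixes f :: "nat \<Rightarrow> 'a \<Rightarrow> real"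
  assumes "finite A"
  shows "(\<Sum>xs\<in>tuples A n. \<Prod>i<n. f i (xs ! i)) = (\<Prod>i<n. \<Sum>a\<in>A. f i a)"
proof (induction n arbitrary: f)
  case 0
  have "tuples A 0 = {[]}" by (auto simp: tuples_def)
  then show ?case by simp
next
  case (Suc n)
  have "inj_on (\<lambda>(a, xs). a # xs) (A \<times> tuples A n)" by (auto simp: inj_on_def)
  then have "(\<Sum>xs\<in>tuples A (Suc n). \<Prod>i<Suc n. f i (xs ! i))
      = (\<Sum>(a, xs)\<in>A \<times> tuples A n. \<Prod>i<Suc n. f i ((a # xs) ! i))"
    unfolding tuples_Suc by (simp add: sum.reindex case_prod_unfold)
  also have "\<dots> = (\<Sum>(a, xs)\<in>A \<times> tuples A n. f 0 a * (\<Prod>i<n. f (Suc i) (xs ! i)))"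
    by (subst prod.lessThan_Suc_shift) simp
  also have "\<dots> = (\<Sum>a\<in>A. \<Sum>xs\<in>tuples A n. f 0 a * (\<Prod>i<n. f (Suc i) (xs ! i)))"
    by (simp add: sum.cartesian_product)
  also have "\<dots> = (\<Sum>a\<in>A. f 0 a * (\<Prod>i<n. \<Sum>a\<in>A. f (Suc i) a))"
    using Suc.IH[of "\<lambda>i. f (Suc i)"] by (simp add: sum_distrib_left[symmetric])
  also have "\<dots> = (\<Prod>i<Suc n. \<Sum>a\<in>A. f i a)"
    by (subst prod.lessThan_Suc_shift) (simp add: sum_distrib_right)
  finally show ?case .
qed

lemma sum_seqs_prod_nth:
  fixes f :: "nat \<Rightarrow> 'a::finite \<Rightarrow> real"
  shows "(\<Sum>xs\<in>seqs n. \<Prod>i<n. f i (xs ! i)) = (\<Prod>i<n. \<Sum>a\<in>UNIV. f i a)"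
  by (simp add: seqs_eq_tuples sum_tuples_prod_nth)

lemma sum_seqs_prod_nth2:
  fixes f :: "nat \<Rightarrow> 'a::finite \<Rightarrow> 'b::finite \<Rightarrow> real"
  shows "(\<Sum>xs\<in>seqs n. \<Sum>ys\<in>seqs n. \<Prod>i<n. f i (xs ! i) (ys ! i))
       = (\<Prod>i<n. \<Sum>a\<in>UNIV. \<Sum>b\<in>UNIV. f i a b)"
proof -
  have "(\<Sum>xs\<in>seqs n. \<Sum>ys\<in>seqs n. \<Prod>i<n. f i (xs ! i) (ys ! i))
      = (\<Sum>xs\<in>seqs n. \<Prod>i<n. \<Sum>b\<in>UNIV. f i (xs ! i) b)"
    by (intro sum.cong refl sum_seqs_prod_nth)
  also have "\<dots> = (\<Prod>i<n. \<Sum>a\<in>UNIV. \<Sum>b\<in>UNIV. f i a b)"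
    using sum_seqs_prod_nth[of "\<lambda>i a. \<Sum>b\<in>UNIV. f i a b" n] by simp
  finally show ?thesis .
qed

lemma iid_pmf_nonneg: "(\<And>a. 0 \<le> P a) \<Longrightarrow> 0 \<le> iid_pmf P n xs"
  unfolding iid_pmf_def by (intro prod_nonneg) auto

lemma sum_iid_pmf_prod:
  assumes "finite A"
  shows "(\<Sum>xs\<in>tuples A n. iid_pmf P n xs * (\<Prod>i<n. h i (xs ! i)))
       = (\<Prod>i<n. \<Sum>a\<in>A. P a * h i a)"
  unfolding iid_pmf_def prod.distrib[symmetric] by (rule sum_tuples_prod_nth[OF assms])

lemma sum_iid_pmf:
  assumes "finite A" "sum P A = 1"
  shows "(\<Sum>xs\<in>tuples A n. iid_pmf P n xs) = 1"
  using sum_iid_pmf_prod[OF assms(1), of P n "\<lambda>_ _. 1"] assms(2) by simp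

lemma sum_iid_pmf_nth:
  assumes "finite A" "sum P A = 1" "m < n"
  shows "(\<Sum>xs\<in>tuples A n. iid_pmf P n xs * g (xs ! m)) = (\<Sum>a\<in>A. P a * g a)"
proof -
  have "(\<Sum>xs\<in>tuples A n. iid_pmf P n xs * g (xs ! m))
      = (\<Sum>xs\<in>tuples A n. iid_pmf P n xs * (\<Prod>i<n. if i = m then g (xs ! i) else 1))"
    using assms(3) by simp
  also have "\<dots> = (\<Prod>i<n. if i = m then (\<Sum>a\<in>A. P a * g a) else 1)"
    by (subst sum_iid_pmf_prod[OF assms(1)])
      (intro prod.cong refl, simp add: assms(2))
  finally show ?thesis
    using assms(3) by simp
qed

lemma sum_iid_pmf_nth_pair:
  assumes "finite A" "sum P A = 1" "m < n" "m' < n" "m \<noteq> m'"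
  shows "(\<Sum>xs\<in>tuples A n. iid_pmf P n xs * (g (xs ! m) * g' (xs ! m')))
       = (\<Sum>a\<in>A. P a * g a) * (\<Sum>a\<in>A. P a * g' a)"
proof -
  let ?h = "\<lambda>i a. (if i = m then g a else 1) * (if i = m' then g' a else 1)"
  have "(\<Sum>xs\<in>tuples A n. iid_pmf P n xs * (g (xs ! m) * g' (xs ! m')))
      = (\<Sum>xs\<in>tuples A n. iid_pmf P n xs * (\<Prod>i<n. ?h i (xs ! i)))"
    using assms(3,4) by (simp add: prod.distrib)
  also have "\<dots> = (\<Prod>i<n. (if i = m then (\<Sum>a\<in>A. P a * g a) else 1)
                          * (if i = m' then (\<Sum>a\<in>A. P a * g' a) else 1))"
    by (subst sum_iid_pmf_prod[OF assms(1)])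
      (use assms(2,5) in \<open>auto simp: if_distrib intro!: prod.cong\<close>)
  finally show ?thesis
    using assms(3,4) by (simp add: prod.distrib)
qed

lemma sum_mult_ln_le:
  fixes w x :: "'a \<Rightarrow> real"
  assumes "finite S" "\<And>s. s \<in> S \<Longrightarrow> 0 \<le> w s"
    and "\<And>s. s \<in> S \<Longrightarrow> 0 < w s \<Longrightarrow> 0 < x s" and "0 < sum w S"
  shows "(\<Sum>s\<in>S. w s * ln (x s)) \<le> sum w S * ln ((\<Sum>s\<in>S. w s * x s) / sum w S)"
proof -
  define S' where "S' = {s\<in>S. 0 < w s}"
  define W where "W = sum w S"
  have "finite S'" "S' \<subseteq> S" using assms(1) by (auto simp: S'_def)
  have zero: "\<And>s. s \<in> S - S' \<Longrightarrow> w s = 0"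
    using assms(2) by (force simp: S'_def)
  have restrict: "(\<Sum>s\<in>S'. w s * f s) = (\<Sum>s\<in>S. w s * f s)" for f :: "'a \<Rightarrow> real"
    using \<open>S' \<subseteq> S\<close> assms(1) zero by (intro sum.mono_neutral_left) auto
  have "W = (\<Sum>s\<in>S'. w s)"
    using restrict[of "\<lambda>_. 1"] by (simp add: W_def)
  then have "S' \<noteq> {}" "(\<Sum>s\<in>S'. w s / W) = 1"
    using assms(4) by (auto simp: W_def sum_divide_distrib[symmetric])
  moreover have "\<And>s. s \<in> S' \<Longrightarrow> x s \<in> {0<..}" "\<And>s. s \<in> S' \<Longrightarrow> 0 \<le> w s / W"
    using assms(3,4) by (auto simp: S'_def W_def)
  ultimately have "(\<Sum>s\<in>S'. w s / W * ln (x s)) \<le> ln (\<Sum>s\<in>S'. (w s / W) *\<^sub>R x s)"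
    by (intro concave_on_sum[OF \<open>finite S'\<close> _ ln_concave]) auto
  then have "(\<Sum>s\<in>S'. w s * ln (x s)) / W \<le> ln ((\<Sum>s\<in>S'. w s * x s) / W)"
    by (simp add: sum_divide_distrib)
  then show ?thesis
    using assms(4) by (simp add: restrict W_def pos_divide_le_eq mult.commute)
qed

lemma one_add_powr_le:
  fixes x \<rho> :: real
  assumes "0 < x" "0 < \<rho>" "\<rho> \<le> 1"
  shows "(1 + x) powr \<rho> \<le> 1 + x powr \<rho>"
proof -
  define u where "u = 1 / (1 + x)"
  define v where "v = x / (1 + x)"
  have uv: "u + v = 1" "0 < u" "0 < v"
    using assms(1) by (simp_all add: u_def v_def field_simps)
  have "1 \<le> u powr \<rho> + v powr \<rho>"
    using powr_mono'[of \<rho> 1 u] powr_mono'[of \<rho> 1 v] assms uv by simp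
  also have "u powr \<rho> + v powr \<rho> = (1 + x powr \<rho>) / (1 + x) powr \<rho>"
    using assms(1) by (simp add: u_def v_def powr_divide add_divide_distrib)
  finally show ?thesis
    using assms(1) by (simp add: field_simps)
qed

lemma ln_add_one_le_powr:
  fixes x \<rho> :: real
  assumes "0 < x" "0 < \<rho>" "\<rho> \<le> 1"
  shows "ln (1 + x) \<le> x powr \<rho> / \<rho>"
proof -
  have "\<rho> * ln (1 + x) = ln ((1 + x) powr \<rho>)"
    using assms by (simp add: ln_powr)
  also have "\<dots> \<le> (1 + x) powr \<rho> - 1"
    using assms by (intro ln_le_minus_one) simp
  also have "\<dots> \<le> x powr \<rho>"
    using one_add_powr_le[OF assms] by simp
  finally show ?thesis
    using assms by (simp add: field_simps)
qed

text \<open>The exponential moment \<open>\<rho> \<mapsto> exp (\<rho> b) E[exp (\<rho> d)]\<close> equals 1 at \<open>\<rho> = 0\<close>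
  with derivative \<open>b + E[d]\<close> there, so it drops below 1 for small \<open>\<rho> > 0\<close>.\<close>
lemma exists_exponential_moment_less_one:
  fixes c d :: "'a \<Rightarrow> real"
  assumes "finite S" "(\<Sum>k\<in>S. c k) = 1" "b + (\<Sum>k\<in>S. c k * d k) < 0"
  shows "\<exists>\<rho>>0. \<rho> < 1 \<and> exp (\<rho> * b) * (\<Sum>k\<in>S. c k * exp (\<rho> * d k)) < 1"
proof -
  define f where "f \<rho> = exp (\<rho> * b) * (\<Sum>k\<in>S. c k * exp (\<rho> * d k))" for \<rho>
  have "(f has_real_derivative (b + (\<Sum>k\<in>S. c k * d k))) (at 0)"
    unfolding f_def
    by (auto intro!: derivative_eq_intros simp: assms(2)) (intro sum.cong refl mult.commute)
  from DERIV_neg_dec_right[OF this assms(3)] obtain \<delta> where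
    "\<delta> > 0" and dec: "\<And>h. h > 0 \<Longrightarrow> h < \<delta> \<Longrightarrow> f (0 + h) < f 0" by blast
  define h where "h = min (\<delta> / 2) (1 / 2)"
  have "0 < h" "h < \<delta>" "h < 1"
    using \<open>\<delta> > 0\<close> by (simp_all add: h_def)
  moreover have "f 0 = 1"
    using assms(2) by (simp add: f_def)
  ultimately have "f h < 1"
    using dec[of h] by simp
  then show ?thesis
    using \<open>0 < h\<close> \<open>h < 1\<close> unfolding f_def by blast
qed

lemma exists_le_weighted_sum:
  fixes \<pi> g :: "'a \<Rightarrow> real"
  assumes "finite S" "\<And>s. s \<in> S \<Longrightarrow> 0 \<le> \<pi> s" "sum \<pi> S = 1"
  shows "\<exists>s\<in>S. g s \<le> (\<Sum>s\<in>S. \<pi> s * g s)"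
proof (rule ccontr)
  assume "\<not> ?thesis"
  then have less: "\<And>s. s \<in> S \<Longrightarrow> (\<Sum>s\<in>S. \<pi> s * g s) < g s" by auto
  obtain s0 where "s0 \<in> S" "0 < \<pi> s0"
    using assms by (metis less_eq_real_def sum_nonpos not_le zero_less_one)
  then have "(\<Sum>s\<in>S. \<pi> s * (\<Sum>s\<in>S. \<pi> s * g s)) < (\<Sum>s\<in>S. \<pi> s * g s)"
    using assms(1,2) less
    by (intro sum_strict_mono_ex1) (auto intro: mult_left_mono mult_strict_left_mono less_imp_le)
  then show False
    using assms(3) by (simp add: sum_distrib_right[symmetric])
qed

lemma kl_div_eq: "kl_div A P Q = (\<Sum>a\<in>A. P a * ln (P a / Q a))"
  unfolding kl_div_def by (intro sum.cong) auto

lemma kl_div_nonneg: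
  fixes P Q :: "'a \<Rightarrow> real"
  assumes "finite A" "\<And>a. a \<in> A \<Longrightarrow> 0 \<le> P a" "\<And>a. a \<in> A \<Longrightarrow> 0 < Q a"
    and "sum P A = 1" "sum Q A = 1"
  shows "0 \<le> kl_div A P Q"
proof -
  have "P a - Q a \<le> P a * ln (P a / Q a)" if "a \<in> A" for a
  proof (cases "P a = 0")
    case False
    then have "0 < P a" "0 < Q a" using assms(2,3) that by (auto simp: less_le)
    then have "ln (Q a / P a) \<le> Q a / P a - 1" by (intro ln_le_minus_one) simp
    with \<open>0 < P a\<close> \<open>0 < Q a\<close> show ?thesis
      by (simp add: ln_div field_simps)
  qed (use assms(3) that in \<open>simp add: less_imp_le\<close>)
  then have "(\<Sum>a\<in>A. P a - Q a) \<le> kl_div A P Q"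
    unfolding kl_div_eq by (rule sum_mono)
  then show ?thesis
    using assms(4,5) by (simp add: sum_subtractf)
qed

lemma sum_mult_of_bool_eq:
  fixes f :: "'a \<Rightarrow> real"
  assumes "finite A" "a \<in> A"
  shows "(\<Sum>b\<in>A. f b * of_bool (b = a)) = f a"
proof -
  have "f b * of_bool (b = a) = (if b = a then f a else 0)" for b
    by simp
  then show ?thesis
    using assms by simp
qed

section \<open>Random codebooks for a discrete memoryless channel\<close>

locale dmc =
  fixes PX :: "'x::finite \<Rightarrow> real" and V :: "'x \<Rightarrow> 'y::finite \<Rightarrow> real"
  assumes PX_pmf: "is_pmf PX" and V_pmf: "\<And>x. is_pmf (V x)"
begin

lemma PX_nonneg: "0 \<le> PX x" and sum_PX: "(\<Sum>x\<in>UNIV. PX x) = 1"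
  using PX_pmf by (simp_all add: is_pmf_def)

lemma V_nonneg: "0 \<le> V x y" and sum_V: "(\<Sum>y\<in>UNIV. V x y) = 1"
  using V_pmf[of x] by (simp_all add: is_pmf_def)

definition PY :: "'y \<Rightarrow> real" where
  "PY y = (\<Sum>x\<in>UNIV. PX x * V x y)"

abbreviation PXn :: "nat \<Rightarrow> 'x list \<Rightarrow> real" where
  "PXn n \<equiv> iid_pmf PX n"

abbreviation PYn :: "nat \<Rightarrow> 'y list \<Rightarrow> real" where
  "PYn n \<equiv> iid_pmf PY n"

definition Vn :: "nat \<Rightarrow> 'x list \<Rightarrow> 'y list \<Rightarrow> real" where
  "Vn n a y = (\<Prod>i<n. V (a ! i) (y ! i))"

abbreviation codebooks :: "nat \<Rightarrow> nat \<Rightarrow> 'x list list set" where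
  "codebooks n N \<equiv> tuples (seqs n) N"

abbreviation codebook_prob :: "nat \<Rightarrow> nat \<Rightarrow> 'x list list \<Rightarrow> real" where
  "codebook_prob n N \<equiv> iid_pmf (PXn n) N"

lemma PY_pos: "PX x * V x y \<noteq> 0 \<Longrightarrow> 0 < PY y"
proof -
  assume "PX x * V x y \<noteq> 0"
  then have "0 < PX x * V x y"
    using PX_nonneg[of x] V_nonneg[of x y] by (simp add: less_le)
  also have "PX x * V x y \<le> PY y"
    unfolding PY_def by (rule member_le_sum) (auto intro: mult_nonneg_nonneg PX_nonneg V_nonneg)
  finally show ?thesis .
qed

lemma sum_PY: "(\<Sum>y\<in>UNIV. PY y) = 1"
  unfolding PY_def by (subst sum.swap) (simp add: sum_distrib_left[symmetric] sum_V sum_PX)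

lemma PXn_nonneg: "0 \<le> PXn n a"
  by (intro iid_pmf_nonneg PX_nonneg)

lemma codebook_prob_nonneg: "0 \<le> codebook_prob n N cs"
  by (intro iid_pmf_nonneg PXn_nonneg)

lemma Vn_nonneg: "0 \<le> Vn n a y"
  unfolding Vn_def by (intro prod_nonneg V_nonneg)

lemma sum_PXn: "(\<Sum>a\<in>seqs n. PXn n a) = 1"
  unfolding seqs_eq_tuples by (intro sum_iid_pmf) (simp_all add: sum_PX)

lemma sum_PYn: "(\<Sum>y\<in>seqs n. PYn n y) = 1"
  unfolding seqs_eq_tuples by (intro sum_iid_pmf) (simp_all add: sum_PY)

lemma sum_Vn: "(\<Sum>y\<in>seqs n. Vn n a y) = 1"
  unfolding Vn_def using sum_seqs_prod_nth[of "\<lambda>i y. V (a ! i) y" n] by (simp add: sum_V)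

lemma sum_PXn_Vn: "(\<Sum>a\<in>seqs n. PXn n a * Vn n a y) = PYn n y"
  unfolding iid_pmf_def Vn_def PY_def
  using sum_seqs_prod_nth[of "\<lambda>i x. PX x * V x (y ! i)" n] by (simp add: prod.distrib)

lemma sum_codebook_prob: "(\<Sum>cs\<in>codebooks n N. codebook_prob n N cs) = 1"
  by (intro sum_iid_pmf) (simp_all add: sum_PXn)

lemma sum_codebook_prob_nth:
  "m < N \<Longrightarrow> (\<Sum>cs\<in>codebooks n N. codebook_prob n N cs * g (cs ! m)) = (\<Sum>a\<in>seqs n. PXn n a * g a)"
  by (intro sum_iid_pmf_nth) (simp_all add: sum_PXn)

lemma sum_codebook_prob_nth_pair:
  "m < N \<Longrightarrow> m' < N \<Longrightarrow> m \<noteq> m' \<Longrightarrow>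
    (\<Sum>cs\<in>codebooks n N. codebook_prob n N cs * (g (cs ! m) * g' (cs ! m')))
    = (\<Sum>a\<in>seqs n. PXn n a * g a) * (\<Sum>a\<in>seqs n. PXn n a * g' a)"
  by (intro sum_iid_pmf_nth_pair) (simp_all add: sum_PXn)

subsection \<open>Threshold decoding\<close>

definition above_threshold :: "real \<Rightarrow> nat \<Rightarrow> 'x list list \<Rightarrow> nat \<Rightarrow> 'y list \<Rightarrow> bool" where
  "above_threshold \<theta> n cs k ys \<longleftrightarrow> \<theta> * PYn n ys < Vn n (cs ! k) ys"

text \<open>The value \<open>N\<close> is not a message; it signals a decoding failure.\<close>
definition threshold_decoder :: "real \<Rightarrow> nat \<Rightarrow> nat \<Rightarrow> 'x list list \<Rightarrow> 'y list \<Rightarrow> nat" where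
  "threshold_decoder \<theta> n N cs ys =
     (if \<exists>k<N. above_threshold \<theta> n cs k ys then LEAST k. k < N \<and> above_threshold \<theta> n cs k ys else N)"

definition code_err :: "real \<Rightarrow> nat \<Rightarrow> nat \<Rightarrow> 'x list list \<Rightarrow> real" where
  "code_err \<theta> n N cs = (1 / real N) *
     (\<Sum>m<N. \<Sum>ys\<in>seqs n. of_bool (threshold_decoder \<theta> n N cs ys \<noteq> m) * Vn n (cs ! m) ys)"

lemma code_err_nonneg: "0 \<le> code_err \<theta> n N cs"
  unfolding code_err_def by (intro mult_nonneg_nonneg sum_nonneg) (auto simp: Vn_nonneg)

lemma threshold_decoder_error_le:
  assumes "m < N"
  shows "of_bool (threshold_decoder \<theta> n N cs ys \<noteq> m)
    \<le> of_bool (\<not> above_threshold \<theta> n cs m ys)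
       + (\<Sum>k\<in>{..<N}-{m}. of_bool (above_threshold \<theta> n cs k ys) :: real)"
proof -
  let ?alarms = "(\<Sum>k\<in>{..<N}-{m}. of_bool (above_threshold \<theta> n cs k ys) :: real)"
  have "0 \<le> ?alarms"
    by (intro sum_nonneg) simp
  moreover have "1 \<le> ?alarms"
    if "above_threshold \<theta> n cs m ys" "threshold_decoder \<theta> n N cs ys \<noteq> m"
  proof -
    define k where "k = (LEAST k. k < N \<and> above_threshold \<theta> n cs k ys)"
    have ex: "\<exists>k<N. above_threshold \<theta> n cs k ys"
      using that(1) assms by blast
    then have "k < N \<and> above_threshold \<theta> n cs k ys"
      unfolding k_def by (rule LeastI_ex)
    moreover have "threshold_decoder \<theta> n N cs ys = k"
      using ex by (simp only: threshold_decoder_def k_def if_True)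
    ultimately have "k \<in> {..<N}-{m}" "above_threshold \<theta> n cs k ys"
      using that(2) by auto
    then have "of_bool (above_threshold \<theta> n cs k ys) \<le> ?alarms"
      by (intro member_le_sum) auto
    with \<open>above_threshold \<theta> n cs k ys\<close> show ?thesis
      by simp
  qed
  ultimately show ?thesis
    by (cases "above_threshold \<theta> n cs m ys") auto
qed

lemma expected_missed_detection:
  "m < N \<Longrightarrow>
    (\<Sum>cs\<in>codebooks n N. codebook_prob n N cs * (of_bool (\<not> above_threshold \<theta> n cs m ys) * Vn n (cs ! m) ys))
    = (\<Sum>a\<in>seqs n. PXn n a * (of_bool (Vn n a ys \<le> \<theta> * PYn n ys) * Vn n a ys))"
  unfolding above_threshold_def not_less by (rule sum_codebook_prob_nth)

text \<open>A wrong codeword is independent of the output, so by Markov's inequality it passes the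
  threshold test with probability at most \<open>1 / \<theta>\<close>.\<close>
lemma expected_false_alarm_le:
  assumes "m < N" "k < N" "k \<noteq> m" "0 < \<theta>"
  shows "(\<Sum>cs\<in>codebooks n N. codebook_prob n N cs * (of_bool (above_threshold \<theta> n cs k ys) * Vn n (cs ! m) ys))
    \<le> (\<Sum>b\<in>seqs n. PXn n b * Vn n b ys) / \<theta>"
proof -
  have "(\<Sum>cs\<in>codebooks n N. codebook_prob n N cs * (of_bool (above_threshold \<theta> n cs k ys) * Vn n (cs ! m) ys))
      = (\<Sum>b\<in>seqs n. PXn n b * of_bool (\<theta> * PYn n ys < Vn n b ys)) * (\<Sum>a\<in>seqs n. PXn n a * Vn n a ys)"
    unfolding above_threshold_def by (rule sum_codebook_prob_nth_pair[OF assms(2,1,3)])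
  also have "\<dots> = (\<Sum>b\<in>seqs n. PXn n b * of_bool (\<theta> * PYn n ys < Vn n b ys)) * PYn n ys"
    by (simp only: sum_PXn_Vn)
  also have "\<dots> = (\<Sum>b\<in>seqs n. PXn n b * (of_bool (\<theta> * PYn n ys < Vn n b ys) * PYn n ys))"
    by (simp only: sum_distrib_right mult.assoc)
  also have "\<dots> \<le> (\<Sum>b\<in>seqs n. PXn n b * (Vn n b ys / \<theta>))"
  proof (intro sum_mono mult_left_mono PXn_nonneg)
    fix b
    show "of_bool (\<theta> * PYn n ys < Vn n b ys) * PYn n ys \<le> Vn n b ys / \<theta>"
      using assms(4) Vn_nonneg[of n b ys] by (auto simp: pos_le_divide_eq mult.commute)
  qed
  finally show ?thesis
    by (simp add: sum_divide_distrib)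
qed

lemma expected_decoding_error_le:
  assumes "m < N" "0 < \<theta>"
  shows "(\<Sum>cs\<in>codebooks n N. codebook_prob n N cs *
      (of_bool (threshold_decoder \<theta> n N cs ys \<noteq> m) * Vn n (cs ! m) ys))
    \<le> (\<Sum>a\<in>seqs n. PXn n a * (of_bool (Vn n a ys \<le> \<theta> * PYn n ys) * Vn n a ys))
       + (real N - 1) * ((\<Sum>b\<in>seqs n. PXn n b * Vn n b ys) / \<theta>)"
proof -
  define miss where "miss cs = of_bool (\<not> above_threshold \<theta> n cs m ys) * Vn n (cs ! m) ys" for cs
  define alarm where "alarm cs k = of_bool (above_threshold \<theta> n cs k ys) * Vn n (cs ! m) ys" for cs k
  have "of_bool (threshold_decoder \<theta> n N cs ys \<noteq> m) * Vn n (cs ! m) ys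
      \<le> miss cs + (\<Sum>k\<in>{..<N}-{m}. alarm cs k)" for cs
  proof -
    have "of_bool (threshold_decoder \<theta> n N cs ys \<noteq> m) * Vn n (cs ! m) ys
        \<le> (of_bool (\<not> above_threshold \<theta> n cs m ys)
          + (\<Sum>k\<in>{..<N}-{m}. of_bool (above_threshold \<theta> n cs k ys))) * Vn n (cs ! m) ys"
      by (intro mult_right_mono threshold_decoder_error_le[OF assms(1)] Vn_nonneg)
    then show ?thesis
      by (simp only: miss_def alarm_def distrib_right sum_distrib_right)
  qed
  then have "(\<Sum>cs\<in>codebooks n N. codebook_prob n N cs *
        (of_bool (threshold_decoder \<theta> n N cs ys \<noteq> m) * Vn n (cs ! m) ys))
      \<le> (\<Sum>cs\<in>codebooks n N. codebook_prob n N cs * (miss cs + (\<Sum>k\<in>{..<N}-{m}. alarm cs k)))"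
    by (intro sum_mono mult_left_mono codebook_prob_nonneg)
  also have "\<dots> = (\<Sum>cs\<in>codebooks n N. codebook_prob n N cs * miss cs)
        + (\<Sum>k\<in>{..<N}-{m}. \<Sum>cs\<in>codebooks n N. codebook_prob n N cs * alarm cs k)"
    by (simp add: distrib_left sum_distrib_left sum.distrib sum.swap[of _ "codebooks n N"])
  also have "\<dots> \<le> (\<Sum>a\<in>seqs n. PXn n a * (of_bool (Vn n a ys \<le> \<theta> * PYn n ys) * Vn n a ys))
        + (\<Sum>k\<in>{..<N}-{m}. (\<Sum>b\<in>seqs n. PXn n b * Vn n b ys) / \<theta>)"
    unfolding miss_def alarm_def expected_missed_detection[OF assms(1)]
    using assms by (intro add_mono order.refl sum_mono expected_false_alarm_le) auto
  also have "\<dots> = (\<Sum>a\<in>seqs n. PXn n a * (of_bool (Vn n a ys \<le> \<theta> * PYn n ys) * Vn n a ys))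
        + (real N - 1) * ((\<Sum>b\<in>seqs n. PXn n b * Vn n b ys) / \<theta>)"
    using assms(1) by (simp add: of_nat_diff)
  finally show ?thesis .
qed

lemma expected_code_err_le:
  assumes "0 < N" "0 < \<theta>"
  shows "(\<Sum>cs\<in>codebooks n N. codebook_prob n N cs * code_err \<theta> n N cs)
    \<le> (\<Sum>a\<in>seqs n. \<Sum>y\<in>seqs n. PXn n a * (of_bool (Vn n a y \<le> \<theta> * PYn n y) * Vn n a y))
       + (real N - 1) / \<theta>"
proof -
  define A where "A y = (\<Sum>a\<in>seqs n. PXn n a * (of_bool (Vn n a y \<le> \<theta> * PYn n y) * Vn n a y))" for y
  define B where "B y = (\<Sum>b\<in>seqs n. PXn n b * Vn n b y) / \<theta>" for y
  have sum_B: "(\<Sum>y\<in>seqs n. B y) = 1 / \<theta>"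
  proof -
    have "(\<Sum>y\<in>seqs n. \<Sum>b\<in>seqs n. PXn n b * Vn n b y) = (\<Sum>b\<in>seqs n. PXn n b * (\<Sum>y\<in>seqs n. Vn n b y))"
      by (subst sum.swap) (simp only: sum_distrib_left)
    then show ?thesis
      unfolding B_def by (simp add: sum_divide_distrib[symmetric] sum_Vn sum_PXn)
  qed
  define err where "err cs m ys = of_bool (threshold_decoder \<theta> n N cs ys \<noteq> m) * Vn n (cs ! m) ys"
    for cs m ys
  have "(\<Sum>cs\<in>codebooks n N. codebook_prob n N cs * code_err \<theta> n N cs)
      = (1 / real N) * (\<Sum>m<N. \<Sum>ys\<in>seqs n. \<Sum>cs\<in>codebooks n N. codebook_prob n N cs * err cs m ys)"
    unfolding code_err_def err_def[symmetric]
    by (simp add: sum_distrib_left mult.left_commute sum.swap[of _ "codebooks n N"])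
  also have "\<dots> \<le> (1 / real N) * (\<Sum>m<N. \<Sum>ys\<in>seqs n. A ys + (real N - 1) * B ys)"
    unfolding A_def B_def err_def using assms(2)
    by (intro mult_left_mono sum_mono expected_decoding_error_le) auto
  also have "\<dots> = (\<Sum>y\<in>seqs n. A y) + (real N - 1) / \<theta>"
    using assms(1) by (simp add: sum.distrib sum_distrib_left[symmetric] sum_B)
  also have "(\<Sum>y\<in>seqs n. A y)
      = (\<Sum>a\<in>seqs n. \<Sum>y\<in>seqs n. PXn n a * (of_bool (Vn n a y \<le> \<theta> * PYn n y) * Vn n a y))"
    unfolding A_def by (rule sum.swap)
  finally show ?thesis .
qed

subsection \<open>The information density\<close>

text \<open>\<open>info_density x y\<close> is only meaningful where \<open>PX x * V x y > 0\<close>; every use weights it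
  by \<open>PX x * V x y\<close>.\<close>
definition info_density :: "'x \<Rightarrow> 'y \<Rightarrow> real" where
  "info_density x y = ln (V x y / PY y)"

definition MI :: real where
  "MI = (\<Sum>x\<in>UNIV. \<Sum>y\<in>UNIV. PX x * V x y * info_density x y)"

definition info_mgf :: "real \<Rightarrow> real" where
  "info_mgf \<rho> = (\<Sum>x\<in>UNIV. \<Sum>y\<in>UNIV. PX x * V x y * exp (\<rho> * info_density x y))"

lemma info_mgf_nonneg: "0 \<le> info_mgf \<rho>"
  unfolding info_mgf_def by (intro sum_nonneg mult_nonneg_nonneg PX_nonneg V_nonneg) auto

lemma mutual_info_eq_MI: "mutual_info (\<lambda>x y. PX x * V x y) = MI / ln 2"
proof -
  have marg: "(\<Sum>y\<in>UNIV. PX x * V x y) = PX x" for x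
    by (simp add: sum_distrib_left[symmetric] sum_V)
  have summand: "(if PX x * V x y = 0 then 0 else PX x * V x y * log 2 (PX x * V x y / (PX x * PY y)))
      = PX x * V x y * info_density x y / ln 2" for x y
    by (cases "PX x = 0") (auto simp: info_density_def log_def)
  have "mutual_info (\<lambda>x y. PX x * V x y) = (\<Sum>x\<in>UNIV. \<Sum>y\<in>UNIV.
      if PX x * V x y = 0 then 0 else PX x * V x y * log 2 (PX x * V x y / (PX x * PY y)))"
    unfolding mutual_info_def marg PY_def ..
  then show ?thesis
    unfolding summand MI_def by (simp add: sum_divide_distrib)
qed

lemma factor_nonzero:
  assumes "PXn n a * Vn n a y \<noteq> 0" "i < n"
  shows "PX (a ! i) * V (a ! i) (y ! i) \<noteq> 0"
proof -
  have "(\<Prod>i<n. PX (a ! i) * V (a ! i) (y ! i)) = PXn n a * Vn n a y"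
    by (simp add: iid_pmf_def Vn_def prod.distrib)
  then show ?thesis
    using assms by (metis finite_lessThan lessThan_iff prod_zero_iff)
qed

lemma PYn_pos:
  assumes "PXn n a * Vn n a y \<noteq> 0"
  shows "0 < PYn n y"
proof -
  have "0 < PY (y ! i)" if "i < n" for i
    using PY_pos[OF factor_nonzero[OF assms that]] .
  then show ?thesis
    unfolding iid_pmf_def by (intro prod_pos) simp
qed

lemma sum_info_density:
  assumes "PXn n a * Vn n a y \<noteq> 0"
  shows "(\<Sum>i<n. info_density (a ! i) (y ! i)) = ln (Vn n a y / PYn n y)"
proof -
  have "V (a ! i) (y ! i) / PY (y ! i) \<noteq> 0" if "i < n" for i
    using PY_pos[OF factor_nonzero[OF assms that]] factor_nonzero[OF assms that] by simp
  then have "(\<Sum>i<n. info_density (a ! i) (y ! i)) = ln (\<Prod>i<n. V (a ! i) (y ! i) / PY (y ! i))"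
    unfolding info_density_def by (subst ln_prod) auto
  then show ?thesis
    by (simp add: Vn_def iid_pmf_def prod_dividef)
qed

lemma sum_prod_info_mgf:
  "(\<Sum>a\<in>seqs n. \<Sum>y\<in>seqs n. PXn n a * Vn n a y * exp (\<rho> * (\<Sum>i<n. info_density (a ! i) (y ! i))))
    = info_mgf \<rho> ^ n"
proof -
  have "PXn n a * Vn n a y * exp (\<rho> * (\<Sum>i<n. info_density (a ! i) (y ! i)))
      = (\<Prod>i<n. PX (a ! i) * V (a ! i) (y ! i) * exp (\<rho> * info_density (a ! i) (y ! i)))" for a y
    by (simp add: iid_pmf_def Vn_def prod.distrib sum_distrib_left exp_sum)
  then show ?thesis
    using sum_seqs_prod_nth2[of "\<lambda>i x y. PX x * V x y * exp (\<rho> * info_density x y)" n]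
    by (simp add: info_mgf_def)
qed

lemma exists_info_mgf_less_one:
  assumes "b + s * MI < 0"
  shows "\<exists>\<rho>>0. \<rho> < 1 \<and> exp (\<rho> * b) * info_mgf (s * \<rho>) < 1"
proof -
  define c where "c = (\<lambda>(x, y). PX x * V x y)"
  define d where "d = (\<lambda>(x, y). s * info_density x y)"
  have pairs: "(\<Sum>k\<in>UNIV. f k) = (\<Sum>x\<in>UNIV. \<Sum>y\<in>UNIV. f (x, y))" for f :: "'x \<times> 'y \<Rightarrow> real"
    by (simp add: sum.cartesian_product flip: UNIV_Times_UNIV)
  have "(\<Sum>k\<in>UNIV. c k) = 1"
    by (simp add: pairs c_def sum_distrib_left[symmetric] sum_V sum_PX)
  moreover have "(\<Sum>k\<in>UNIV. c k * d k) = s * MI"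
    by (simp add: pairs c_def d_def MI_def sum_distrib_left ac_simps)
  moreover have "(\<Sum>k\<in>UNIV. c k * exp (\<rho> * d k)) = info_mgf (s * \<rho>)" for \<rho>
    by (simp add: pairs c_def d_def info_mgf_def ac_simps)
  ultimately show ?thesis
    using exists_exponential_moment_less_one[of UNIV c b d] assms by simp
qed

lemma sum_below_threshold_le:
  assumes "0 < \<theta>" "0 < \<rho>"
  shows "(\<Sum>a\<in>seqs n. \<Sum>y\<in>seqs n. PXn n a * (of_bool (Vn n a y \<le> \<theta> * PYn n y) * Vn n a y))
    \<le> \<theta> powr \<rho> * info_mgf (- \<rho>) ^ n"
proof -
  have "PXn n a * (of_bool (Vn n a y \<le> \<theta> * PYn n y) * Vn n a y)
      \<le> \<theta> powr \<rho> * (PXn n a * Vn n a y * exp (- \<rho> * (\<Sum>i<n. info_density (a ! i) (y ! i))))" for a y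
  proof (cases "PXn n a * Vn n a y = 0 \<or> \<not> Vn n a y \<le> \<theta> * PYn n y")
    case True
    then show ?thesis
      by (auto intro!: mult_nonneg_nonneg PXn_nonneg Vn_nonneg)
  next
    case False
    then have nz: "PXn n a * Vn n a y \<noteq> 0" and below: "Vn n a y \<le> \<theta> * PYn n y"
      by simp_all
    then have "0 < Vn n a y" "0 < PYn n y" "Vn n a y / PYn n y \<le> \<theta>"
      using Vn_nonneg[of n a y] PYn_pos[OF nz] by (simp_all add: less_le pos_divide_le_eq)
    then have "ln (Vn n a y / PYn n y) \<le> ln \<theta>"
      using assms(1) by (subst ln_le_cancel_iff) simp_all
    then have "\<theta> powr (- \<rho>) \<le> exp (- \<rho> * ln (Vn n a y / PYn n y))"
      using assms by (simp add: powr_def)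
    then have "1 \<le> \<theta> powr \<rho> * exp (- \<rho> * ln (Vn n a y / PYn n y))"
      using assms(1) by (simp add: powr_minus field_simps)
    then have "PXn n a * Vn n a y * 1
        \<le> PXn n a * Vn n a y * (\<theta> powr \<rho> * exp (- \<rho> * ln (Vn n a y / PYn n y)))"
      by (intro mult_left_mono mult_nonneg_nonneg PXn_nonneg Vn_nonneg)
    then show ?thesis
      using sum_info_density[OF nz] below by (simp add: ac_simps)
  qed
  then have "(\<Sum>a\<in>seqs n. \<Sum>y\<in>seqs n. PXn n a * (of_bool (Vn n a y \<le> \<theta> * PYn n y) * Vn n a y))
      \<le> \<theta> powr \<rho> * (\<Sum>a\<in>seqs n. \<Sum>y\<in>seqs n. PXn n a * Vn n a y * exp (- \<rho> * (\<Sum>i<n. info_density (a ! i) (y ! i))))"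
    by (simp add: sum_distrib_left sum_mono)
  then show ?thesis
    by (simp only: sum_prod_info_mgf)
qed

lemma expected_code_err_geometric:
  assumes "r < MI"
  shows "\<exists>t c. 0 \<le> c \<and> c < 1 \<and> (\<forall>n N. 0 < N \<longrightarrow> real N - 1 \<le> exp (real n * r) \<longrightarrow>
    (\<Sum>cs\<in>codebooks n N. codebook_prob n N cs * code_err (exp (real n * t)) n N cs) \<le> 2 * c ^ n)"
proof -
  define t where "t = (r + MI) / 2"
  obtain \<rho> where \<rho>: "0 < \<rho>" "exp (\<rho> * t) * info_mgf (- \<rho>) < 1"
    using exists_info_mgf_less_one[of t "- 1"] assms by (auto simp: t_def)
  define c where "c = max (exp (\<rho> * t) * info_mgf (- \<rho>)) (exp (r - t))"
  have "0 \<le> c" "c < 1"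
    using \<rho> assms by (auto simp: c_def t_def le_max_iff_disj)
  moreover have "(\<Sum>cs\<in>codebooks n N. codebook_prob n N cs * code_err (exp (real n * t)) n N cs)
      \<le> 2 * c ^ n" if "0 < N" "real N - 1 \<le> exp (real n * r)" for n N
  proof -
    have "(\<Sum>cs\<in>codebooks n N. codebook_prob n N cs * code_err (exp (real n * t)) n N cs)
        \<le> exp (real n * t) powr \<rho> * info_mgf (- \<rho>) ^ n + (real N - 1) / exp (real n * t)"
      using expected_code_err_le[OF that(1), of "exp (real n * t)" n]
        sum_below_threshold_le[of "exp (real n * t)" \<rho> n] \<rho>(1) by simp
    also have "exp (real n * t) powr \<rho> * info_mgf (- \<rho>) ^ n = (exp (\<rho> * t) * info_mgf (- \<rho>)) ^ n"
      by (simp add: powr_def power_mult_distrib ac_simps flip: exp_of_nat_mult)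
    also have "(real N - 1) / exp (real n * t) \<le> exp (r - t) ^ n"
    proof -
      have "exp (r - t) ^ n * exp (real n * t) = exp (real n * r)"
        by (simp add: algebra_simps flip: exp_of_nat_mult exp_add)
      then show ?thesis
        using that(2) by (simp add: divide_le_eq)
    qed
    also have "(exp (\<rho> * t) * info_mgf (- \<rho>)) ^ n + exp (r - t) ^ n \<le> 2 * c ^ n"
      using info_mgf_nonneg[of "- \<rho>"] unfolding c_def mult_2
      by (intro add_mono power_mono) auto
    finally show ?thesis
      by simp
  qed
  ultimately show ?thesis
    by blast
qed

subsection \<open>Resolvability\<close>

definition output_dist :: "nat \<Rightarrow> nat \<Rightarrow> 'x list list \<Rightarrow> 'y list \<Rightarrow> real" where
  "output_dist n N cs y = (\<Sum>m<N. Vn n (cs ! m) y) / real N"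

definition code_div :: "nat \<Rightarrow> nat \<Rightarrow> 'x list list \<Rightarrow> real" where
  "code_div n N cs = kl_div (seqs n) (output_dist n N cs) (PYn n)"

lemma output_dist_ge: "m < N \<Longrightarrow> Vn n (cs ! m) y / real N \<le> output_dist n N cs y"
  unfolding output_dist_def by (intro divide_right_mono member_le_sum) (auto simp: Vn_nonneg)

lemma output_dist_nonneg: "0 \<le> output_dist n N cs y"
  unfolding output_dist_def by (intro divide_nonneg_nonneg sum_nonneg Vn_nonneg) auto

lemma sum_output_dist: "0 < N \<Longrightarrow> (\<Sum>y\<in>seqs n. output_dist n N cs y) = 1"
  unfolding output_dist_def sum_divide_distrib[symmetric]
  by (subst sum.swap) (simp add: sum_Vn)

lemma code_div_nonneg:
  assumes "0 < N" "\<And>y. 0 < PY y"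
  shows "0 \<le> code_div n N cs"
proof -
  have "0 < PYn n y" for y
    using assms(2) by (simp add: iid_pmf_def prod_pos)
  then show ?thesis
    unfolding code_div_def
    by (intro kl_div_nonneg) (simp_all add: assms(1) output_dist_nonneg sum_output_dist sum_PYn)
qed

lemma code_div_eq:
  "code_div n N cs = (1 / real N) *
     (\<Sum>m<N. \<Sum>y\<in>seqs n. Vn n (cs ! m) y * ln (output_dist n N cs y / PYn n y))"
proof -
  have "output_dist n N cs y * ln (output_dist n N cs y / PYn n y)
      = (1 / real N) * (\<Sum>m<N. Vn n (cs ! m) y * ln (output_dist n N cs y / PYn n y))" for y
    unfolding output_dist_def by (simp add: sum_distrib_right)
  then show ?thesis
    unfolding code_div_def kl_div_eq
    by (simp add: sum_divide_distrib sum.swap[of _ "seqs n"])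
qed

lemma expected_output_dist_mult_nth:
  assumes "m < N"
  shows "(\<Sum>cs\<in>codebooks n N. codebook_prob n N cs * (output_dist n N cs y * g (cs ! m)))
    = ((\<Sum>a\<in>seqs n. PXn n a * (Vn n a y * g a))
        + (real N - 1) * PYn n y * (\<Sum>a\<in>seqs n. PXn n a * g a)) / real N"
proof -
  have summand: "(\<Sum>cs\<in>codebooks n N. codebook_prob n N cs * (Vn n (cs ! k) y * g (cs ! m)))
      = (if k = m then (\<Sum>a\<in>seqs n. PXn n a * (Vn n a y * g a))
         else PYn n y * (\<Sum>a\<in>seqs n. PXn n a * g a))" if "k < N" for k
  proof (cases "k = m")
    case True
    then show ?thesis
      using sum_codebook_prob_nth[OF assms, of n "\<lambda>b. Vn n b y * g b"] by simp
  next
    case False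
    then show ?thesis
      using sum_codebook_prob_nth_pair[OF that assms, of n "\<lambda>b. Vn n b y" g] by (simp add: sum_PXn_Vn)
  qed
  have "codebook_prob n N cs * (output_dist n N cs y * g (cs ! m))
      = (\<Sum>k<N. codebook_prob n N cs * (Vn n (cs ! k) y * g (cs ! m))) / real N" for cs
    unfolding output_dist_def
    by (simp add: sum_divide_distrib sum_distrib_left sum_distrib_right mult.assoc mult.left_commute)
  then have "(\<Sum>cs\<in>codebooks n N. codebook_prob n N cs * (output_dist n N cs y * g (cs ! m)))
      = (\<Sum>k<N. \<Sum>cs\<in>codebooks n N. codebook_prob n N cs * (Vn n (cs ! k) y * g (cs ! m))) / real N"
    by (simp add: sum_divide_distrib[symmetric] sum.swap[of _ "codebooks n N"])
  also have "\<dots> = (\<Sum>k<N. if k = m then (\<Sum>a\<in>seqs n. PXn n a * (Vn n a y * g a))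
         else PYn n y * (\<Sum>a\<in>seqs n. PXn n a * g a)) / real N"
    by (simp add: summand)
  also have "\<dots> = ((\<Sum>a\<in>seqs n. PXn n a * (Vn n a y * g a))
        + (real N - 1) * PYn n y * (\<Sum>a\<in>seqs n. PXn n a * g a)) / real N"
    using assms by (simp add: sum.If_cases Int_absorb1 of_nat_diff flip: Diff_eq)
  finally show ?thesis .
qed

lemma conditional_mean_output_ratio:
  assumes "m < N" "a \<in> seqs n" "0 < PYn n y"
  shows "(\<Sum>cs\<in>codebooks n N. codebook_prob n N cs * of_bool (cs ! m = a) * (output_dist n N cs y / PYn n y))
    = PXn n a * (Vn n a y / (real N * PYn n y) + (real N - 1) / real N)"
proof -
  have indicator: "(\<Sum>b\<in>seqs n. f b * of_bool (b = a)) = f a" for f :: "'x list \<Rightarrow> real"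
    using assms(2) by (simp add: sum_mult_of_bool_eq)
  have "(\<Sum>b\<in>seqs n. PXn n b * (Vn n b y * of_bool (b = a))) = PXn n a * Vn n a y"
    using indicator[of "\<lambda>b. PXn n b * Vn n b y"] by (simp add: mult.assoc)
  moreover have "(\<Sum>b\<in>seqs n. PXn n b * of_bool (b = a)) = PXn n a"
    by (rule indicator)
  ultimately have mean: "(\<Sum>cs\<in>codebooks n N. codebook_prob n N cs * (output_dist n N cs y * of_bool (cs ! m = a)))
      = (PXn n a * Vn n a y + (real N - 1) * PYn n y * PXn n a) / real N"
    using expected_output_dist_mult_nth[OF assms(1), of n y "\<lambda>b. of_bool (b = a)"] by (simp only:)
  have "(\<Sum>cs\<in>codebooks n N. codebook_prob n N cs * of_bool (cs ! m = a) * (output_dist n N cs y / PYn n y))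
      = (\<Sum>cs\<in>codebooks n N. codebook_prob n N cs * (output_dist n N cs y * of_bool (cs ! m = a))) / PYn n y"
    unfolding sum_divide_distrib by (intro sum.cong refl) simp
  also have "\<dots> = (PXn n a * Vn n a y + (real N - 1) * PYn n y * PXn n a) / real N / PYn n y"
    by (simp only: mean)
  also have "\<dots> = PXn n a * (Vn n a y / (real N * PYn n y) + (real N - 1) / real N)"
    using assms(1,3) by (simp add: field_simps)
  finally show ?thesis .
qed

text \<open>Given that codeword \<open>m\<close> is \<open>a\<close>, the other codewords are independent of it, so by
  Jensen's inequality the conditional mean of \<open>ln (output_dist / PYn)\<close> is at most
  \<open>ln (Vn a y / (N PYn y) + (N - 1) / N)\<close>.\<close>
lemma conditional_log_output_ratio_le:
  assumes "m < N" "a \<in> seqs n" "PXn n a * Vn n a y \<noteq> 0"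
  shows "(\<Sum>cs\<in>codebooks n N. codebook_prob n N cs * of_bool (cs ! m = a) * ln (output_dist n N cs y / PYn n y))
    \<le> PXn n a * ln (1 + Vn n a y / (real N * PYn n y))"
proof -
  define w where "w cs = codebook_prob n N cs * of_bool (cs ! m = a)" for cs
  define x where "x cs = output_dist n N cs y / PYn n y" for cs
  have pos: "0 < PXn n a" "0 < Vn n a y" "0 < PYn n y"
    using assms(3) PXn_nonneg[of n a] Vn_nonneg[of n a y] PYn_pos[OF assms(3)] by (auto simp: less_le)
  have w_nonneg: "0 \<le> w cs" for cs
    by (simp add: w_def codebook_prob_nonneg)
  have sum_w: "sum w (codebooks n N) = PXn n a"
    using sum_codebook_prob_nth[OF assms(1), of n "\<lambda>b. of_bool (b = a)"] assms(2)
    by (simp add: w_def sum_mult_of_bool_eq)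
  have x_pos: "0 < x cs" if "0 < w cs" for cs
  proof -
    from that have "cs ! m = a"
      by (cases "cs ! m = a") (simp_all add: w_def)
    then have "Vn n a y / real N \<le> output_dist n N cs y"
      using output_dist_ge[OF assms(1)] by blast
    moreover have "0 < Vn n a y / real N"
      using pos assms(1) by simp
    ultimately show ?thesis
      using pos by (simp add: x_def)
  qed
  have "(\<Sum>cs\<in>codebooks n N. w cs * x cs)
      = PXn n a * (Vn n a y / (real N * PYn n y) + (real N - 1) / real N)"
    unfolding w_def x_def by (rule conditional_mean_output_ratio[OF assms(1,2) pos(3)])
  then have ratio: "(\<Sum>cs\<in>codebooks n N. w cs * x cs) / sum w (codebooks n N)
      = Vn n a y / (real N * PYn n y) + (real N - 1) / real N"
    using pos(1) by (simp add: sum_w)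
  have "(\<Sum>cs\<in>codebooks n N. w cs * ln (x cs))
      \<le> PXn n a * ln ((\<Sum>cs\<in>codebooks n N. w cs * x cs) / sum w (codebooks n N))"
    using sum_mult_ln_le[of "codebooks n N" w x] x_pos pos(1)
    by (simp add: finite_tuples w_nonneg sum_w)
  also have "\<dots> \<le> PXn n a * ln (1 + Vn n a y / (real N * PYn n y))"
    unfolding ratio using pos assms(1)
    by (intro mult_left_mono ln_mono) (auto simp: divide_le_eq intro: add_pos_nonneg)
  finally show ?thesis
    by (simp add: w_def x_def)
qed

lemma conditional_log_term_le:
  assumes "m < N" "a \<in> seqs n"
  shows "(\<Sum>cs\<in>codebooks n N. codebook_prob n N cs *
      (Vn n a y * ln (output_dist n N cs y / PYn n y) * of_bool (cs ! m = a)))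
    \<le> PXn n a * Vn n a y * ln (1 + Vn n a y / (real N * PYn n y))"
proof (cases "PXn n a * Vn n a y = 0")
  case True
  have zero: "codebook_prob n N cs * (Vn n a y * ln (output_dist n N cs y / PYn n y) * of_bool (cs ! m = a)) = 0"
    for cs
  proof (cases "Vn n a y = 0 \<or> cs ! m \<noteq> a")
    case False
    with True assms(1) have "codebook_prob n N cs = 0"
      unfolding iid_pmf_def by (intro prod_zero) auto
    then show ?thesis
      by simp
  qed auto
  have "(\<Sum>cs\<in>codebooks n N. codebook_prob n N cs *
      (Vn n a y * ln (output_dist n N cs y / PYn n y) * of_bool (cs ! m = a))) = 0"
    by (simp only: zero sum.neutral_const)
  moreover have "PXn n a * Vn n a y * ln (1 + Vn n a y / (real N * PYn n y)) = 0"
    using True by simp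
  ultimately show ?thesis
    by linarith
next
  case False
  have "(\<Sum>cs\<in>codebooks n N. codebook_prob n N cs *
        (Vn n a y * ln (output_dist n N cs y / PYn n y) * of_bool (cs ! m = a)))
      = Vn n a y * (\<Sum>cs\<in>codebooks n N.
          codebook_prob n N cs * of_bool (cs ! m = a) * ln (output_dist n N cs y / PYn n y))"
    by (simp add: sum_distrib_left ac_simps)
  also have "\<dots> \<le> Vn n a y * (PXn n a * ln (1 + Vn n a y / (real N * PYn n y)))"
    by (intro mult_left_mono conditional_log_output_ratio_le assms False Vn_nonneg)
  finally show ?thesis
    by (simp add: ac_simps)
qed

lemma log_term_le_info_mgf_term:
  assumes "0 < \<rho>" "\<rho> \<le> 1" "0 < N"
  shows "PXn n a * Vn n a y * ln (1 + Vn n a y / (real N * PYn n y))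
    \<le> real N powr (- \<rho>) / \<rho> * (PXn n a * Vn n a y * exp (\<rho> * (\<Sum>i<n. info_density (a ! i) (y ! i))))"
proof (cases "PXn n a * Vn n a y = 0")
  case False
  then have pos: "0 < PXn n a * Vn n a y" "0 < Vn n a y" "0 < PYn n y"
    using PXn_nonneg[of n a] Vn_nonneg[of n a y] PYn_pos[OF False] by (auto simp: less_le)
  define u where "u = Vn n a y / (real N * PYn n y)"
  have "0 < u"
    using pos assms(3) by (simp add: u_def)
  have "ln u = ln (Vn n a y / PYn n y) - ln (real N)"
    using pos assms(3) by (simp add: u_def ln_div ln_mult)
  have "u powr \<rho> = exp (\<rho> * ln u)"
    using \<open>0 < u\<close> by (simp add: powr_def)
  also have "\<dots> = exp (- \<rho> * ln (real N)) * exp (\<rho> * ln (Vn n a y / PYn n y))"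
    unfolding \<open>ln u = _\<close> by (simp add: algebra_simps flip: exp_add)
  also have "exp (- \<rho> * ln (real N)) = real N powr (- \<rho>)"
    using assms(3) by (simp add: powr_def)
  finally have "u powr \<rho> = real N powr (- \<rho>) * exp (\<rho> * ln (Vn n a y / PYn n y))" .
  then have "ln (1 + u) \<le> real N powr (- \<rho>) / \<rho> * exp (\<rho> * ln (Vn n a y / PYn n y))"
    using ln_add_one_le_powr[OF \<open>0 < u\<close> assms(1,2)] by simp
  then have "PXn n a * Vn n a y * ln (1 + u)
      \<le> PXn n a * Vn n a y * (real N powr (- \<rho>) / \<rho> * exp (\<rho> * ln (Vn n a y / PYn n y)))"
    using pos(1) by (intro mult_left_mono) auto
  then show ?thesis
    unfolding u_def sum_info_density[OF False] by (simp add: ac_simps)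
qed auto

lemma expected_log_term_le:
  assumes "0 < \<rho>" "\<rho> \<le> 1" "m < N"
  shows "(\<Sum>cs\<in>codebooks n N. codebook_prob n N cs * (Vn n (cs ! m) y * ln (output_dist n N cs y / PYn n y)))
    \<le> real N powr (- \<rho>) / \<rho> *
       (\<Sum>a\<in>seqs n. PXn n a * Vn n a y * exp (\<rho> * (\<Sum>i<n. info_density (a ! i) (y ! i))))"
proof -
  have split: "f (cs ! m) = (\<Sum>a\<in>seqs n. f a * of_bool (cs ! m = a))" if "cs \<in> codebooks n N"
    for cs and f :: "'x list \<Rightarrow> real"
  proof -
    have "f a * of_bool (cs ! m = a) = (if cs ! m = a then f (cs ! m) else 0)" for a
      by simp
    then show ?thesis
      using nth_in_tuples[OF that assms(3)] by simp
  qed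
  have "(\<Sum>cs\<in>codebooks n N. codebook_prob n N cs * (Vn n (cs ! m) y * ln (output_dist n N cs y / PYn n y)))
      = (\<Sum>a\<in>seqs n. \<Sum>cs\<in>codebooks n N. codebook_prob n N cs *
          (Vn n a y * ln (output_dist n N cs y / PYn n y) * of_bool (cs ! m = a)))"
  proof -
    have "codebook_prob n N cs * (Vn n (cs ! m) y * ln (output_dist n N cs y / PYn n y))
        = (\<Sum>a\<in>seqs n. codebook_prob n N cs *
            (Vn n a y * ln (output_dist n N cs y / PYn n y) * of_bool (cs ! m = a)))"
      if "cs \<in> codebooks n N" for cs
      using split[OF that, of "\<lambda>b. Vn n b y * ln (output_dist n N cs y / PYn n y)"]
      by (simp only: sum_distrib_left)
    then show ?thesis
      by (subst sum.swap) (rule sum.cong, simp_all)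
  qed
  also have "\<dots> \<le> (\<Sum>a\<in>seqs n. PXn n a * Vn n a y * ln (1 + Vn n a y / (real N * PYn n y)))"
    by (intro sum_mono conditional_log_term_le assms(3))
  also have "\<dots> \<le> (\<Sum>a\<in>seqs n. real N powr (- \<rho>) / \<rho> *
      (PXn n a * Vn n a y * exp (\<rho> * (\<Sum>i<n. info_density (a ! i) (y ! i)))))"
    using assms by (intro sum_mono log_term_le_info_mgf_term) auto
  finally show ?thesis
    by (simp add: sum_distrib_left)
qed

lemma expected_code_div_le:
  assumes "0 < \<rho>" "\<rho> \<le> 1" "0 < N"
  shows "(\<Sum>cs\<in>codebooks n N. codebook_prob n N cs * code_div n N cs)
    \<le> real N powr (- \<rho>) / \<rho> * info_mgf \<rho> ^ n"
proof -
  have "(\<Sum>cs\<in>codebooks n N. codebook_prob n N cs * code_div n N cs)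
      = (1 / real N) * (\<Sum>m<N. \<Sum>y\<in>seqs n. \<Sum>cs\<in>codebooks n N.
          codebook_prob n N cs * (Vn n (cs ! m) y * ln (output_dist n N cs y / PYn n y)))"
    unfolding code_div_eq
    by (simp add: sum_distrib_left mult.left_commute sum.swap[of _ "codebooks n N"])
  also have "\<dots> \<le> (1 / real N) * (\<Sum>m<N. \<Sum>y\<in>seqs n. real N powr (- \<rho>) / \<rho> *
       (\<Sum>a\<in>seqs n. PXn n a * Vn n a y * exp (\<rho> * (\<Sum>i<n. info_density (a ! i) (y ! i)))))"
    using assms by (intro mult_left_mono sum_mono expected_log_term_le) auto
  also have "\<dots> = real N powr (- \<rho>) / \<rho> * (\<Sum>y\<in>seqs n. \<Sum>a\<in>seqs n.
       PXn n a * Vn n a y * exp (\<rho> * (\<Sum>i<n. info_density (a ! i) (y ! i))))"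
    using assms(3) by (simp only: sum_distrib_left[symmetric] sum_constant card_lessThan) simp
  also have "\<dots> = real N powr (- \<rho>) / \<rho> * info_mgf \<rho> ^ n"
    by (subst sum.swap) (simp only: sum_prod_info_mgf)
  finally show ?thesis .
qed

lemma expected_code_div_geometric:
  assumes "MI < r"
  shows "\<exists>K c. 0 \<le> c \<and> c < 1 \<and> (\<forall>n N. exp (real n * r) \<le> real N \<longrightarrow>
    (\<Sum>cs\<in>codebooks n N. codebook_prob n N cs * code_div n N cs) \<le> K * c ^ n)"
proof -
  obtain \<rho> where \<rho>: "0 < \<rho>" "\<rho> < 1" "exp (\<rho> * - r) * info_mgf (1 * \<rho>) < 1"
    using exists_info_mgf_less_one[of "- r" 1] assms by auto
  define c where "c = exp (\<rho> * - r) * info_mgf \<rho>"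
  have "0 \<le> c" "c < 1"
    using \<rho> info_mgf_nonneg by (simp_all add: c_def)
  moreover have "(\<Sum>cs\<in>codebooks n N. codebook_prob n N cs * code_div n N cs) \<le> 1 / \<rho> * c ^ n"
    if "exp (real n * r) \<le> real N" for n N
  proof -
    have "0 < real N"
      using that by (meson exp_gt_zero less_le_trans)
    then have "real N powr (- \<rho>) \<le> exp (real n * r) powr (- \<rho>)"
      using that \<rho>(1) by (intro powr_mono2') auto
    also have "\<dots> = exp (\<rho> * - r) ^ n"
      by (simp add: powr_def ac_simps flip: exp_of_nat_mult)
    finally have "real N powr (- \<rho>) / \<rho> * info_mgf \<rho> ^ n \<le> exp (\<rho> * - r) ^ n / \<rho> * info_mgf \<rho> ^ n"
      using \<rho>(1) info_mgf_nonneg by (intro mult_right_mono divide_right_mono) auto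
    then show ?thesis
      using expected_code_div_le[of \<rho> N n] \<rho>(1,2) \<open>0 < real N\<close>
      by (simp add: c_def power_mult_distrib)
  qed
  ultimately show ?thesis
    by blast
qed

end

section \<open>The state-dependent channel\<close>

definition avg_chan_Y :: "('s::finite \<Rightarrow> real) \<Rightarrow> ('x \<Rightarrow> 's \<Rightarrow> 'y \<Rightarrow> 'z::finite \<Rightarrow> real) \<Rightarrow> 'x \<Rightarrow> 'y \<Rightarrow> real" where
  "avg_chan_Y Q W x y = (\<Sum>s\<in>UNIV. \<Sum>z\<in>UNIV. Q s * W x s y z)"

definition avg_chan_Z :: "('s::finite \<Rightarrow> real) \<Rightarrow> ('x \<Rightarrow> 's \<Rightarrow> 'y::finite \<Rightarrow> 'z \<Rightarrow> real) \<Rightarrow> 'x \<Rightarrow> 'z \<Rightarrow> real" where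
  "avg_chan_Z Q W x z = (\<Sum>s\<in>UNIV. \<Sum>y\<in>UNIV. Q s * W x s y z)"

definition codebook_encoder :: "'x list list \<Rightarrow> nat \<Rightarrow> nat \<Rightarrow> 's list \<Rightarrow> 'x" where
  "codebook_encoder cs i m ss = cs ! m ! i"

lemma is_pmf_avg_chan:
  fixes Q :: "'s::finite \<Rightarrow> real" and W :: "'x \<Rightarrow> 's \<Rightarrow> 'y::finite \<Rightarrow> 'z::finite \<Rightarrow> real"
  assumes Q: "is_pmf Q" and W: "\<And>x s. is_pmf (\<lambda>(y, z). W x s y z)"
  shows "is_pmf (avg_chan_Y Q W x)" and "is_pmf (avg_chan_Z Q W x)"
proof -
  have W_nonneg: "0 \<le> W x s y z" for s y z
    using W[of x s] by (simp add: is_pmf_def)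
  have "(\<Sum>p\<in>UNIV. (\<lambda>(y, z). W x s y z) p) = 1" for s
    using W[of x s] by (simp add: is_pmf_def)
  then have W_sum: "(\<Sum>y\<in>UNIV. \<Sum>z\<in>UNIV. W x s y z) = 1" for s
    by (simp add: sum.cartesian_product flip: UNIV_Times_UNIV)
  have Q_nonneg: "0 \<le> Q s" and Q_sum: "(\<Sum>s\<in>UNIV. Q s) = 1" for s
    using Q by (simp_all add: is_pmf_def)
  have "(\<Sum>y\<in>UNIV. avg_chan_Y Q W x y) = (\<Sum>s\<in>UNIV. Q s * (\<Sum>y\<in>UNIV. \<Sum>z\<in>UNIV. W x s y z))"
    unfolding avg_chan_Y_def by (subst sum.swap) (simp add: sum_distrib_left)
  then show "is_pmf (avg_chan_Y Q W x)"
    unfolding is_pmf_def avg_chan_Y_def[abs_def]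
    by (simp add: W_sum Q_sum Q_nonneg W_nonneg sum_nonneg avg_chan_Y_def)
  have "(\<Sum>z\<in>UNIV. avg_chan_Z Q W x z) = (\<Sum>s\<in>UNIV. Q s * (\<Sum>y\<in>UNIV. \<Sum>z\<in>UNIV. W x s y z))"
    unfolding avg_chan_Z_def
    by (subst sum.swap) (simp add: sum_distrib_left sum.swap[of _ "UNIV :: 'z set"])
  then show "is_pmf (avg_chan_Z Q W x)"
    unfolding is_pmf_def
    by (simp add: W_sum Q_sum Q_nonneg W_nonneg sum_nonneg avg_chan_Z_def)
qed

lemma joint_XY_eq: "joint_XY Q W PX = (\<lambda>x y. PX x * avg_chan_Y Q W x y)"
  unfolding joint_XY_def avg_chan_Y_def by (simp add: sum_distrib_left ac_simps)

lemma joint_XZ_eq: "joint_XZ Q W PX = (\<lambda>x z. PX x * avg_chan_Z Q W x z)"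
  unfolding joint_XZ_def avg_chan_Z_def by (simp add: sum_distrib_left ac_simps)

lemma code_error_codebook_encoder:
  "code_error Q W N n (codebook_encoder cs) dec = (1 / real N) *
     (\<Sum>m<N. \<Sum>ys\<in>seqs n. of_bool (dec ys \<noteq> m) * (\<Prod>i<n. avg_chan_Y Q W (cs ! m ! i) (ys ! i)))"
proof -
  have marginal: "(\<Sum>ss\<in>seqs n. \<Sum>zs\<in>seqs n. \<Prod>i<n. Q (ss ! i) * W (c ! i) (ss ! i) (ys ! i) (zs ! i))
      = (\<Prod>i<n. avg_chan_Y Q W (c ! i) (ys ! i))" for c ys
    using sum_seqs_prod_nth2[of "\<lambda>i s z. Q s * W (c ! i) s (ys ! i) z" n] by (simp add: avg_chan_Y_def)
  have inner: "(\<Sum>ss\<in>seqs n. \<Sum>zs\<in>seqs n. if dec ys \<noteq> m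
        then 1 / real N * (\<Prod>i<n. Q (ss ! i) * W (cs ! m ! i) (ss ! i) (ys ! i) (zs ! i)) else 0)
      = 1 / real N * (of_bool (dec ys \<noteq> m) * (\<Prod>i<n. avg_chan_Y Q W (cs ! m ! i) (ys ! i)))" for m ys
    by (cases "dec ys = m") (simp_all add: sum_divide_distrib[symmetric] marginal)
  have "code_error Q W N n (codebook_encoder cs) dec
      = (\<Sum>m<N. \<Sum>ys\<in>seqs n. \<Sum>ss\<in>seqs n. \<Sum>zs\<in>seqs n. if dec ys \<noteq> m
          then 1 / real N * (\<Prod>i<n. Q (ss ! i) * W (cs ! m ! i) (ss ! i) (ys ! i) (zs ! i)) else 0)"
    unfolding code_error_def code_joint_def codebook_encoder_def
    by (intro sum.cong refl) (rule sum.swap)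
  also have "\<dots> = (\<Sum>m<N. \<Sum>ys\<in>seqs n.
      1 / real N * (of_bool (dec ys \<noteq> m) * (\<Prod>i<n. avg_chan_Y Q W (cs ! m ! i) (ys ! i))))"
    by (simp only: inner)
  finally show ?thesis
    by (simp only: sum_distrib_left)
qed

lemma code_PZ_codebook_encoder:
  "code_PZ Q W N n (codebook_encoder cs) zs = (\<Sum>m<N. \<Prod>i<n. avg_chan_Z Q W (cs ! m ! i) (zs ! i)) / real N"
proof -
  have marginal: "(\<Sum>ss\<in>seqs n. \<Sum>ys\<in>seqs n. \<Prod>i<n. Q (ss ! i) * W (c ! i) (ss ! i) (ys ! i) (zs ! i))
      = (\<Prod>i<n. avg_chan_Z Q W (c ! i) (zs ! i))" for c
    using sum_seqs_prod_nth2[of "\<lambda>i s y. Q s * W (c ! i) s y (zs ! i)" n] by (simp add: avg_chan_Z_def)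
  have "code_PZ Q W N n (codebook_encoder cs) zs = (\<Sum>m<N. 1 / real N *
      (\<Sum>ss\<in>seqs n. \<Sum>ys\<in>seqs n. \<Prod>i<n. Q (ss ! i) * W (cs ! m ! i) (ss ! i) (ys ! i) (zs ! i)))"
    unfolding code_PZ_def code_joint_def codebook_encoder_def by (simp only: sum_distrib_left)
  then show ?thesis
    by (simp only: marginal sum_distrib_left[symmetric]) simp
qed

lemma covert_achievable_SCT_if_bounded:
  fixes enc :: "nat \<Rightarrow> nat \<Rightarrow> nat \<Rightarrow> 's::finite list \<Rightarrow> 'x"
    and dec :: "nat \<Rightarrow> 'y::finite list \<Rightarrow> nat"
    and W :: "'x \<Rightarrow> 's \<Rightarrow> 'y \<Rightarrow> 'z::finite \<Rightarrow> real"
  assumes "B \<longlonglongrightarrow> 0"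
    and "\<And>n. 0 \<le> code_error Q W (num_msgs R n) n (enc n) (dec n)"
    and "\<And>n. 0 \<le> code_covertness Q W x0 (num_msgs R n) n (enc n)"
    and "\<And>n. code_error Q W (num_msgs R n) n (enc n) (dec n)
              + code_covertness Q W x0 (num_msgs R n) n (enc n) \<le> B n"
  shows "covert_achievable_SCT Q W x0 R"
proof -
  have "code_error Q W (num_msgs R n) n (enc n) (dec n) \<le> B n"
    and "code_covertness Q W x0 (num_msgs R n) n (enc n) \<le> B n" for n
    using assms(2-4)[of n] by linarith+
  with assms(1-3) show ?thesis
    unfolding covert_achievable_SCT_def
    by (blast intro: tendsto_sandwich[of "\<lambda>_. 0" _ _ B] always_eventually)
qed

lemma num_msgs_bounds:
  shows "exp (real n * (r * ln 2)) \<le> real (num_msgs r n)"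
    and "real (num_msgs r n) - 1 \<le> exp (real n * (r * ln 2))"
    and "0 < num_msgs r n"
proof -
  have exp_eq: "exp (real n * (r * ln 2)) = 2 powr (real n * r)"
    by (simp add: powr_def ac_simps)
  show ge: "exp (real n * (r * ln 2)) \<le> real (num_msgs r n)"
    unfolding exp_eq num_msgs_def by (rule real_nat_ceiling_ge)
  have "(0::real) \<le> of_int \<lceil>2 powr (real n * r)\<rceil>"
    using le_of_int_ceiling[of "2 powr (real n * r)"] powr_ge_zero[of 2 "real n * r"] by linarith
  then show "real (num_msgs r n) - 1 \<le> exp (real n * (r * ln 2))"
    unfolding exp_eq using of_int_ceiling_le_add_one[of "2 powr (real n * r)"]
    by (simp add: num_msgs_def)
  show "0 < num_msgs r n"
    using ge exp_gt_zero[of "real n * (r * ln 2)"] by (metis less_le_trans of_nat_0_less_iff)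
qed

lemma code_error_threshold_decoder:
  assumes "dmc PX (avg_chan_Y Q W)"
  shows "code_error Q W N n (codebook_encoder cs) (dmc.threshold_decoder PX (avg_chan_Y Q W) \<theta> n N cs)
    = dmc.code_err PX (avg_chan_Y Q W) \<theta> n N cs"
proof -
  interpret dmc PX "avg_chan_Y Q W" by fact
  show ?thesis
    by (simp add: code_error_codebook_encoder code_err_def Vn_def)
qed

lemma PY_avg_chan_Z:
  assumes "dmc PX (avg_chan_Z Q W)"
  shows "dmc.PY PX (avg_chan_Z Q W) = marg_Z Q W PX"
proof -
  interpret dmc PX "avg_chan_Z Q W" by fact
  show ?thesis
    by (simp add: fun_eq_iff marg_Z_def joint_XZ_eq PY_def)
qed

lemma code_covertness_codebook_encoder:
  assumes "dmc PX (avg_chan_Z Q W)" "marg_Z Q W PX = innocent_dist Q W x0"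
  shows "code_covertness Q W x0 N n (codebook_encoder cs) = dmc.code_div PX (avg_chan_Z Q W) n N cs"
proof -
  interpret dmc PX "avg_chan_Z Q W" by fact
  have "code_PZ Q W N n (codebook_encoder cs) = output_dist n N cs"
    by (simp add: fun_eq_iff code_PZ_codebook_encoder output_dist_def Vn_def)
  moreover have "(\<lambda>zs. \<Prod>i<n. innocent_dist Q W x0 (zs ! i)) = PYn n"
    using PY_avg_chan_Z[OF assms(1)] assms(2) by (simp add: fun_eq_iff iid_pmf_def)
  ultimately show ?thesis
    unfolding code_covertness_def code_div_def by simp
qed

lemma exists_codebook_below_expectations:
  assumes Y: "dmc PX V" and Z: "dmc PX V'" and "\<And>z. 0 < dmc.PY PX V' z" "0 < N"
    and "(\<Sum>cs\<in>tuples (seqs n) N. iid_pmf (iid_pmf PX n) N cs * dmc.code_err PX V \<theta> n N cs) \<le> e"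
    and "(\<Sum>cs\<in>tuples (seqs n) N. iid_pmf (iid_pmf PX n) N cs * dmc.code_div PX V' n N cs) \<le> d"
  shows "\<exists>cs. 0 \<le> dmc.code_err PX V \<theta> n N cs \<and> 0 \<le> dmc.code_div PX V' n N cs
    \<and> dmc.code_err PX V \<theta> n N cs + dmc.code_div PX V' n N cs \<le> e + d"
proof -
  interpret Y: dmc PX V by (fact Y)
  interpret Z: dmc PX V' by (fact Z)
  obtain cs where "Y.code_err \<theta> n N cs + Z.code_div n N cs
      \<le> (\<Sum>cs\<in>Y.codebooks n N. Y.codebook_prob n N cs * (Y.code_err \<theta> n N cs + Z.code_div n N cs))"
    using exists_le_weighted_sum[of "Y.codebooks n N" "Y.codebook_prob n N"
        "\<lambda>cs. Y.code_err \<theta> n N cs + Z.code_div n N cs"]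
    by (auto simp: finite_tuples Y.codebook_prob_nonneg Y.sum_codebook_prob)
  also have "\<dots> \<le> e + d"
    using assms(5,6) by (simp add: distrib_left sum.distrib)
  finally show ?thesis
    using Y.code_err_nonneg Z.code_div_nonneg[OF assms(4,3)] by blast
qed

lemma covert_achievable_SCT_between:
  fixes Q :: "'s::finite \<Rightarrow> real" and W :: "'x::finite \<Rightarrow> 's \<Rightarrow> 'y::finite \<Rightarrow> 'z::finite \<Rightarrow> real"
  assumes Q: "is_pmf Q" and W: "\<And>x s. is_pmf (\<lambda>(y, z). W x s y z)"
    and innocent_pos: "\<And>z. innocent_dist Q W x0 z > 0" and PX: "PX \<in> set_D Q W x0"
    and rate: "mutual_info (joint_XZ Q W PX) < r" "r < mutual_info (joint_XY Q W PX)"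
  shows "covert_achievable_SCT Q W x0 r"
proof -
  have "is_pmf PX" and marg: "marg_Z Q W PX = innocent_dist Q W x0"
    using PX by (simp_all add: set_D_def)
  interpret Y: dmc PX "avg_chan_Y Q W"
    using \<open>is_pmf PX\<close> is_pmf_avg_chan[OF Q W] by unfold_locales
  interpret Z: dmc PX "avg_chan_Z Q W"
    using \<open>is_pmf PX\<close> is_pmf_avg_chan[OF Q W] by unfold_locales
  have "Z.PY z > 0" for z
    using marg innocent_pos[of z] PY_avg_chan_Z[OF Z.dmc_axioms] by simp
  have "r * ln 2 < Y.MI" and "Z.MI < r * ln 2"
    using rate Y.mutual_info_eq_MI Z.mutual_info_eq_MI
    by (simp_all add: joint_XY_eq joint_XZ_eq less_divide_eq divide_less_eq)
  obtain t c1 where c1: "0 \<le> c1" "c1 < 1"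
    and err: "\<And>n N. 0 < N \<Longrightarrow> real N - 1 \<le> exp (real n * (r * ln 2)) \<Longrightarrow>
      (\<Sum>cs\<in>Y.codebooks n N. Y.codebook_prob n N cs * Y.code_err (exp (real n * t)) n N cs) \<le> 2 * c1 ^ n"
    using Y.expected_code_err_geometric[OF \<open>r * ln 2 < Y.MI\<close>] by blast
  obtain K c2 where c2: "0 \<le> c2" "c2 < 1"
    and div: "\<And>n N. exp (real n * (r * ln 2)) \<le> real N \<Longrightarrow>
      (\<Sum>cs\<in>Y.codebooks n N. Y.codebook_prob n N cs * Z.code_div n N cs) \<le> K * c2 ^ n"
    using Z.expected_code_div_geometric[OF \<open>Z.MI < r * ln 2\<close>] by blast
  define B where "B n = 2 * c1 ^ n + K * c2 ^ n" for n
  define dec where "dec n = Y.threshold_decoder (exp (real n * t)) n (num_msgs r n)" for n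
  have "\<exists>cs. 0 \<le> Y.code_err (exp (real n * t)) n (num_msgs r n) cs \<and> 0 \<le> Z.code_div n (num_msgs r n) cs
      \<and> Y.code_err (exp (real n * t)) n (num_msgs r n) cs + Z.code_div n (num_msgs r n) cs \<le> B n" for n
    by (unfold B_def, intro exists_codebook_below_expectations[OF Y.dmc_axioms Z.dmc_axioms
        \<open>\<And>z. Z.PY z > 0\<close>] err div num_msgs_bounds)
  then obtain cs where "\<forall>n. 0 \<le> Y.code_err (exp (real n * t)) n (num_msgs r n) (cs n)
      \<and> 0 \<le> Z.code_div n (num_msgs r n) (cs n)
      \<and> Y.code_err (exp (real n * t)) n (num_msgs r n) (cs n) + Z.code_div n (num_msgs r n) (cs n) \<le> B n"
    by (metis choice)
  moreover have "B \<longlonglongrightarrow> 0"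
    unfolding B_def using c1 c2 by (intro tendsto_add_zero tendsto_mult_right_zero LIMSEQ_power_zero) auto
  ultimately show ?thesis
    by (intro covert_achievable_SCT_if_bounded[where enc = "\<lambda>n. codebook_encoder (cs n)" and dec = "\<lambda>n. dec n (cs n)"])
      (auto simp: dec_def code_error_threshold_decoder[OF Y.dmc_axioms]
        code_covertness_codebook_encoder[OF Z.dmc_axioms marg])
qed

theorem theorem11:
  fixes Q :: "'s::finite \<Rightarrow> real"
    and W :: "'x::finite \<Rightarrow> 's \<Rightarrow> 'y::finite \<Rightarrow> 'z::finite \<Rightarrow> real"
    and x0 :: 'x
  assumes "is_pmf Q"
    and "\<And>x s. is_pmf (\<lambda>(y, z). W x s y z)"
    and "\<And>z. innocent_dist Q W x0 z > 0"
  shows "\<forall>R\<in>set_S Q W x0. ereal R \<le> covert_capacity_SCT Q W x0"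
proof
  fix R assume "R \<in> set_S Q W x0"
  then obtain PX where PX: "PX \<in> set_D Q W x0" and R: "R \<le> mutual_info (joint_XY Q W PX)"
    unfolding set_S_def by blast
  have "ereal (mutual_info (joint_XY Q W PX)) \<le> covert_capacity_SCT Q W x0"
    unfolding covert_capacity_SCT_def
  proof (rule dense_le_bounded[of "ereal (mutual_info (joint_XZ Q W PX))"])
    show "ereal (mutual_info (joint_XZ Q W PX)) < ereal (mutual_info (joint_XY Q W PX))"
      using PX by (simp add: set_D_def)
  next
    fix w assume "ereal (mutual_info (joint_XZ Q W PX)) < w" "w < ereal (mutual_info (joint_XY Q W PX))"
    moreover from this obtain r where "w = ereal r"
      by (cases w) auto
    ultimately have "covert_achievable_SCT Q W x0 r"
      by (intro covert_achievable_SCT_between[OF assms PX]) auto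
    then show "w \<le> Sup (ereal ` {R. covert_achievable_SCT Q W x0 R})"
      using \<open>w = ereal r\<close> by (intro Sup_upper) auto
  qed
  with R show "ereal R \<le> covert_capacity_SCT Q W x0"
    by (meson ereal_less_eq(3) order_trans)
qed

end
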